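(* Let $T$ be an almost commutative ring, $t\mapsto\bar t$ an involution on $T$ and $\lambda\in\mathrm{center}(T)$. Then $T$ is a direct limit (directed union) of involution invariant subrings $T_j$ ($j\in\Psi$) containing $\lambda$ such that for every $j\in\Psi$ there is a subring $C'_j\subseteq\mathrm{center}(T_j)$ for which $T_j$ is a Noetherian $C_j$-module, where $C_j$ is the subring of $T_j$ consisting of all finite sums of elements of the form $c\bar c$ and $-c\bar c$ with $c\in C'_j$.
   Context: Rings are associative with $1\neq0$. A ring is almost commutative if it is finitely generated as a module over its center. An involution is a map $t\mapsto\bar t$ with $\overline{t+s}=\bar t+\bar s$, $\overline{ts}=\bar s\bar t$, $\bar{\bar t}=t$; a subring is involution invariant if it is mapped into itself by the involution. *)

theory Defs
  imports Main
begin

text \<open>Ambient ring: a type of class ring_1 (associative, with 1); subsets are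
subrings of it.\<close>

definition ring_center :: "'a::ring_1 set" where
  "ring_center = {z. \<forall>x. z * x = x * z}"

definition center_of :: "'a::ring_1 set \<Rightarrow> 'a set" where
  "center_of A = {z \<in> A. \<forall>x\<in>A. z * x = x * z}"

definition almost_commutative :: "'a::ring_1 itself \<Rightarrow> bool" where
  "almost_commutative _ \<longleftrightarrow>
     (\<exists>S::'a set. finite S \<and>
        (\<forall>t. \<exists>c. (\<forall>s\<in>S. c s \<in> ring_center) \<and> t = (\<Sum>s\<in>S. c s * s)))"

definition is_involution :: "('a::ring_1 \<Rightarrow> 'a) \<Rightarrow> bool" where
  "is_involution bar \<longleftrightarrow>
     (\<forall>t s. bar (t + s) = bar t + bar s) \<and>
     (\<forall>t s. bar (t * s) = bar s * bar t) \<and>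
     (\<forall>t. bar (bar t) = t)"

definition is_subring :: "'a::ring_1 set \<Rightarrow> bool" where
  "is_subring A \<longleftrightarrow> 0 \<in> A \<and> 1 \<in> A \<and>
     (\<forall>x\<in>A. \<forall>y\<in>A. x + y \<in> A \<and> x - y \<in> A \<and> x * y \<in> A)"

inductive_set norm_sums :: "('a::ring_1 \<Rightarrow> 'a) \<Rightarrow> 'a set \<Rightarrow> 'a set"
  for bar :: "'a \<Rightarrow> 'a" and C' :: "'a set" where
  zero: "0 \<in> norm_sums bar C'"
| plus: "c \<in> C' \<Longrightarrow> x \<in> norm_sums bar C' \<Longrightarrow> c * bar c + x \<in> norm_sums bar C'"
| minus: "c \<in> C' \<Longrightarrow> x \<in> norm_sums bar C' \<Longrightarrow> - (c * bar c) + x \<in> norm_sums bar C'"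

definition lin_span :: "'a::ring_1 set \<Rightarrow> 'a set \<Rightarrow> 'a set" where
  "lin_span C G = {(\<Sum>g\<in>G. c g * g) | c. \<forall>g\<in>G. c g \<in> C}"

definition is_submodule :: "'a::ring_1 set \<Rightarrow> 'a set \<Rightarrow> 'a set \<Rightarrow> bool" where
  "is_submodule C M N \<longleftrightarrow> N \<subseteq> M \<and> 0 \<in> N \<and>
     (\<forall>x\<in>N. \<forall>y\<in>N. x + y \<in> N) \<and> (\<forall>c\<in>C. \<forall>x\<in>N. c * x \<in> N)"

definition noetherian_module :: "'a::ring_1 set \<Rightarrow> 'a set \<Rightarrow> bool" where
  "noetherian_module C M \<longleftrightarrow> is_submodule C M M \<and>
     (\<forall>N. is_submodule C M N \<longrightarrow> (\<exists>G. finite G \<and> G \<subseteq> N \<and> N = lin_span C G))"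

end

theory Submission
  imports Defs HOL.Hull
begin

lemma
  assumes "is_subring R"
  shows subring_0: "0 \<in> R" and subring_1: "1 \<in> R"
    and subring_add: "x \<in> R \<Longrightarrow> y \<in> R \<Longrightarrow> x + y \<in> R"
    and subring_diff: "x \<in> R \<Longrightarrow> y \<in> R \<Longrightarrow> x - y \<in> R"
    and subring_mult: "x \<in> R \<Longrightarrow> y \<in> R \<Longrightarrow> x * y \<in> R"
  using assms unfolding is_subring_def by auto

lemma subring_uminus: "is_subring R \<Longrightarrow> x \<in> R \<Longrightarrow> - x \<in> R"
  using subring_diff[of R 0 x] subring_0[of R] by simp

lemma is_subring_Inter: "(\<And>A. A \<in> \<A> \<Longrightarrow> is_subring A) \<Longrightarrow> is_subring (\<Inter>\<A>)"
  unfolding is_subring_def by blast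

lemma is_subring_hull: "is_subring (is_subring hull X)"
  by (rule hull_in) (simp add: is_subring_Inter)

lemma is_subring_Ints: "is_subring \<int>"
  unfolding is_subring_def by simp

lemma Ints_subset_subring:
  assumes "is_subring R"
  shows "\<int> \<subseteq> R"
proof
  fix z :: 'a assume "z \<in> \<int>"
  then obtain k where "z = of_int k" by (rule Ints_cases)
  moreover have "of_int k \<in> R"
  proof (induct k rule: int_induct[of _ 0])
    case (step1 i)
    then show ?case using subring_add[OF assms _ subring_1[OF assms]] by simp
  next
    case (step2 i)
    then show ?case using subring_diff[OF assms _ subring_1[OF assms]] by simp
  qed (simp add: subring_0[OF assms])
  ultimately show "z \<in> R" by simp
qed

lemma subring_hull_empty: "is_subring hull {} = \<int>"
  by (rule hull_unique) (simp_all add: is_subring_Ints Ints_subset_subring)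

lemma ring_center_commute: "z \<in> ring_center \<Longrightarrow> z * x = x * z"
  by (simp add: ring_center_def)

lemma ring_center_mult:
  assumes "a \<in> ring_center" "b \<in> ring_center"
  shows "a * b \<in> ring_center"
  unfolding ring_center_def
proof (intro CollectI allI)
  fix x
  have "a * b * x = a * (x * b)" using ring_center_commute[OF assms(2)] by (simp add: mult.assoc)
  also have "\<dots> = x * (a * b)" using ring_center_commute[OF assms(1)] by (simp add: mult.assoc)
  finally show "a * b * x = x * (a * b)" .
qed

lemma is_subring_ring_center: "is_subring ring_center"
  unfolding is_subring_def
proof (intro conjI ballI)
  fix a b :: 'a assume a: "a \<in> ring_center" and b: "b \<in> ring_center"
  show "a + b \<in> ring_center" "a - b \<in> ring_center"
    using a b by (simp_all add: ring_center_def distrib_left distrib_right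
        left_diff_distrib right_diff_distrib)
  show "a * b \<in> ring_center" using a b by (rule ring_center_mult)
qed (simp_all add: ring_center_def)

lemma subring_hull_subset_center: "X \<subseteq> ring_center \<Longrightarrow> is_subring hull X \<subseteq> ring_center"
  by (rule hull_minimal) (simp_all add: is_subring_ring_center)

inductive_set mspan :: "'a::ring_1 set \<Rightarrow> 'a set \<Rightarrow> 'a set" for R G where
  mspan_zero: "0 \<in> mspan R G"
| mspan_step: "r \<in> R \<Longrightarrow> g \<in> G \<Longrightarrow> x \<in> mspan R G \<Longrightarrow> r * g + x \<in> mspan R G"

definition finitely_generated :: "'a::ring_1 set \<Rightarrow> 'a set \<Rightarrow> bool" where
  "finitely_generated R N \<longleftrightarrow> (\<exists>F. finite F \<and> F \<subseteq> N \<and> N = mspan R F)"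

lemma mspan_least:
  assumes "0 \<in> X" "\<And>r g x. r \<in> R \<Longrightarrow> g \<in> G \<Longrightarrow> x \<in> X \<Longrightarrow> r * g + x \<in> X"
  shows "mspan R G \<subseteq> X"
proof
  fix x assume "x \<in> mspan R G"
  then show "x \<in> X" by induct (use assms in auto)
qed

lemma mspan_mono: "R \<subseteq> R' \<Longrightarrow> G \<subseteq> G' \<Longrightarrow> mspan R G \<subseteq> mspan R' G'"
  by (rule mspan_least) (auto intro: mspan.intros)

lemma mspan_add: "x \<in> mspan R G \<Longrightarrow> y \<in> mspan R G \<Longrightarrow> x + y \<in> mspan R G"
  by (induct rule: mspan.induct) (auto simp: add.assoc intro: mspan.intros)

lemma mspan_gen: "1 \<in> R \<Longrightarrow> g \<in> G \<Longrightarrow> g \<in> mspan R G"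
  using mspan_step[of 1 R g G 0] by (simp add: mspan_zero)

lemma mspan_smult:
  assumes "is_subring R" "c \<in> R" "x \<in> mspan R G"
  shows "c * x \<in> mspan R G"
  using assms(3)
proof induct
  case (mspan_step r g x)
  have "c * (r * g + x) = (c * r) * g + c * x" by (simp add: distrib_left mult.assoc)
  then show ?case using mspan_step assms by (auto intro: mspan.mspan_step subring_mult)
qed (simp add: mspan_zero)

lemma mspan_diff:
  assumes "is_subring R" "x \<in> mspan R G" "y \<in> mspan R G"
  shows "x - y \<in> mspan R G"
  using mspan_add[OF assms(2) mspan_smult[OF assms(1) subring_uminus[OF assms(1) subring_1[OF assms(1)]] assms(3)]]
  by simp

lemma mspan_submodule: "is_subring R \<Longrightarrow> is_submodule R (mspan R G) (mspan R G)"
  unfolding is_submodule_def by (auto intro: mspan_zero mspan_add mspan_smult)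

lemma mspan_empty: "mspan R {} = {0}"
  using mspan_least[of "{0}" R "{}"] mspan_zero by blast

lemma mspan_singleton_one: "is_subring R \<Longrightarrow> mspan R {1} = R"
  using mspan_least[of R R "{1}"] mspan_step[of _ R 1 "{1}" 0] mspan_zero
  by (fastforce simp: subring_0 subring_add)

lemma mspan_insert:
  assumes "is_subring R"
  shows "mspan R (insert g G) = {r * g + m | r m. r \<in> R \<and> m \<in> mspan R G}"
proof
  show "mspan R (insert g G) \<subseteq> {r * g + m | r m. r \<in> R \<and> m \<in> mspan R G}"
  proof (rule mspan_least)
    show "0 \<in> {r * g + m | r m. r \<in> R \<and> m \<in> mspan R G}"
      using subring_0[OF assms] mspan_zero by force
  next
    fix r' g' x assume r': "r' \<in> R" and g': "g' \<in> insert g G"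
      and "x \<in> {r * g + m | r m. r \<in> R \<and> m \<in> mspan R G}"
    then obtain r m where rm: "r \<in> R" "m \<in> mspan R G" "x = r * g + m" by blast
    show "r' * g' + x \<in> {r * g + m | r m. r \<in> R \<and> m \<in> mspan R G}"
    proof (cases "g' = g")
      case True
      then have "r' * g' + x = (r' + r) * g + m" using rm by (simp add: algebra_simps)
      then show ?thesis using rm r' assms by (blast intro: subring_add)
    next
      case False
      then have "r' * g' + m \<in> mspan R G" using g' r' rm by (auto intro: mspan_step)
      moreover have "r' * g' + x = r * g + (r' * g' + m)" using rm by (simp add: algebra_simps)
      ultimately show ?thesis using rm by blast
    qed
  qed
  show "{r * g + m | r m. r \<in> R \<and> m \<in> mspan R G} \<subseteq> mspan R (insert g G)"
    using mspan_mono[of R R G "insert g G"] by (auto intro: mspan_step)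
qed

lemma lin_span_eq_mspan:
  assumes "finite G" "is_subring R"
  shows "lin_span R G = mspan R G"
proof
  show "lin_span R G \<subseteq> mspan R G"
  proof (clarsimp simp: lin_span_def)
    fix c assume "\<forall>g\<in>G. c g \<in> R"
    with assms(1) show "(\<Sum>g\<in>G. c g * g) \<in> mspan R G"
    proof (induct G rule: finite_induct)
      case (insert g F)
      then have "(\<Sum>g\<in>F. c g * g) \<in> mspan R (insert g F)"
        using mspan_mono[of R R F "insert g F"] by auto
      then show ?case using insert by (auto intro: mspan_step)
    qed (simp add: mspan_zero)
  qed
  show "mspan R G \<subseteq> lin_span R G"
  proof (rule mspan_least)
    show "0 \<in> lin_span R G"
      unfolding lin_span_def using subring_0[OF assms(2)] by (auto intro!: exI[of _ "\<lambda>_. 0"])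
  next
    fix r g x assume r: "r \<in> R" and g: "g \<in> G" and "x \<in> lin_span R G"
    then obtain c where c: "\<forall>h\<in>G. c h \<in> R" "x = (\<Sum>h\<in>G. c h * h)" unfolding lin_span_def by auto
    define c' where "c' = c(g := r + c g)"
    have "(\<Sum>h\<in>G. c' h * h) = c' g * g + (\<Sum>h\<in>G - {g}. c h * h)"
      using assms(1) g by (simp add: sum.remove c'_def)
    also have "\<dots> = r * g + x"
      using assms(1) g c(2) by (simp add: sum.remove c'_def distrib_right add.assoc)
    finally have "r * g + x = (\<Sum>h\<in>G. c' h * h)" ..
    moreover have "\<forall>h\<in>G. c' h \<in> R" using c r assms(2) by (simp add: c'_def subring_add)
    ultimately show "r * g + x \<in> lin_span R G" unfolding lin_span_def by blast
  qed
qed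

lemma mspan_mult:
  assumes R: "is_subring R" "R \<subseteq> ring_center"
    and G: "\<And>g h. g \<in> G \<Longrightarrow> h \<in> G \<Longrightarrow> g * h \<in> mspan R G"
    and x: "x \<in> mspan R G" and y: "y \<in> mspan R G"
  shows "x * y \<in> mspan R G"
proof -
  have gen_mult: "g * y \<in> mspan R G" if "g \<in> G" for g
    using y
  proof induct
    case (mspan_step r h y)
    have "g * (r * h + y) = r * (g * h) + g * y"
      using ring_center_commute[of r g] mspan_step(1) R(2) by (auto simp: distrib_left mult.assoc[symmetric])
    then show ?case using mspan_step that G mspan_smult[OF R(1)] mspan_add by metis
  qed (simp add: mspan_zero)
  from x show ?thesis
  proof induct
    case (mspan_step r g x)
    have "(r * g + x) * y = r * (g * y) + x * y" by (simp add: distrib_right mult.assoc)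
    then show ?case using mspan_step gen_mult mspan_smult[OF R(1)] mspan_add by metis
  qed (simp add: mspan_zero)
qed

lemma mspan_tower:
  assumes "is_subring R" "R \<subseteq> R'" "H \<subseteq> R'" "R' = mspan R H" "\<And>a b. a \<in> R' \<Longrightarrow> b \<in> R' \<Longrightarrow> a * b \<in> R'"
  shows "mspan R' G = mspan R ((\<lambda>(h, g). h * g) ` (H \<times> G))"
proof
  let ?HG = "(\<lambda>(h, g). h * g) ` (H \<times> G)"
  have scalar: "r' * g \<in> mspan R ?HG" if "r' \<in> mspan R H" "g \<in> G" for r' g
    using that(1)
  proof induct
    case (mspan_step r h y)
    have "h * g \<in> ?HG" using mspan_step that(2) by force
    from mspan.mspan_step[OF mspan_step(1) this mspan_step(4)]
    show ?case by (simp add: distrib_right mult.assoc)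
  qed (simp add: mspan_zero)
  show "mspan R' G \<subseteq> mspan R ?HG"
  proof (rule mspan_least)
    fix r g x assume "r \<in> R'" "g \<in> G" "x \<in> mspan R ?HG"
    then show "r * g + x \<in> mspan R ?HG" using scalar assms(4) mspan_add by blast
  qed (rule mspan_zero)
  show "mspan R ?HG \<subseteq> mspan R' G"
  proof (rule mspan_least)
    fix r g x assume r: "r \<in> R" and "g \<in> ?HG" and x: "x \<in> mspan R' G"
    then obtain h g' where hg: "h \<in> H" "g' \<in> G" "g = h * g'" by auto
    have "r * h \<in> R'" using r hg assms(2,3,5) by blast
    from mspan.mspan_step[OF this hg(2) x]
    show "r * g + x \<in> mspan R' G" using hg by (simp add: mult.assoc)
  qed (rule mspan_zero)
qed

lemma
  assumes "is_submodule R M N"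
  shows submodule_subset: "N \<subseteq> M" and submodule_zero: "0 \<in> N"
    and submodule_add: "x \<in> N \<Longrightarrow> y \<in> N \<Longrightarrow> x + y \<in> N"
    and submodule_smult: "c \<in> R \<Longrightarrow> x \<in> N \<Longrightarrow> c * x \<in> N"
  using assms unfolding is_submodule_def by auto

lemma submodule_mspan_subset: "is_submodule R M N \<Longrightarrow> G \<subseteq> N \<Longrightarrow> mspan R G \<subseteq> N"
  by (rule mspan_least) (auto simp: is_submodule_def)

lemma submodule_diff:
  assumes "is_subring R" "is_submodule R M N" "x \<in> N" "y \<in> N"
  shows "x - y \<in> N"
proof -
  have "(- 1) * y \<in> N"
    using assms subring_uminus[OF assms(1) subring_1[OF assms(1)]] unfolding is_submodule_def by blast
  then have "x + (- 1) * y \<in> N" using assms(2,3) unfolding is_submodule_def by blast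
  then show ?thesis by simp
qed

definition noetherian_ring :: "'a::ring_1 set \<Rightarrow> bool" where
  "noetherian_ring R \<longleftrightarrow> is_subring R \<and> (\<forall>I. is_submodule R R I \<longrightarrow> finitely_generated R I)"

definition coeff_ideal :: "'a::ring_1 set \<Rightarrow> 'a set \<Rightarrow> 'a \<Rightarrow> 'a set \<Rightarrow> 'a set" where
  "coeff_ideal R M g N = {r \<in> R. \<exists>m\<in>M. r * g + m \<in> N}"

lemma coeff_ideal_ideal:
  assumes R: "is_subring R" and M: "is_submodule R M M" and N: "is_submodule R N N"
  shows "is_submodule R R (coeff_ideal R M g N)"
  unfolding is_submodule_def
proof (intro conjI ballI)
  show "coeff_ideal R M g N \<subseteq> R" unfolding coeff_ideal_def by auto
  show "0 \<in> coeff_ideal R M g N"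
    using subring_0[OF R] M N unfolding coeff_ideal_def is_submodule_def by force
next
  fix a b assume "a \<in> coeff_ideal R M g N" "b \<in> coeff_ideal R M g N"
  then obtain m1 m2 where h: "a \<in> R" "b \<in> R" "m1 \<in> M" "m2 \<in> M" "a * g + m1 \<in> N" "b * g + m2 \<in> N"
    unfolding coeff_ideal_def by auto
  have "(a + b) * g + (m1 + m2) = (a * g + m1) + (b * g + m2)" by (simp add: algebra_simps)
  moreover have "(a * g + m1) + (b * g + m2) \<in> N" using h(5,6) N unfolding is_submodule_def by blast
  ultimately have "(a + b) * g + (m1 + m2) \<in> N" by (simp only:)
  moreover have "m1 + m2 \<in> M" using h(3,4) M unfolding is_submodule_def by blast
  ultimately show "a + b \<in> coeff_ideal R M g N"
    using subring_add[OF R h(1,2)] unfolding coeff_ideal_def by blast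
next
  fix c a assume c: "c \<in> R" and "a \<in> coeff_ideal R M g N"
  then obtain m where h: "a \<in> R" "m \<in> M" "a * g + m \<in> N" unfolding coeff_ideal_def by auto
  have "(c * a) * g + c * m = c * (a * g + m)" by (simp add: algebra_simps)
  moreover have "c * (a * g + m) \<in> N" using h(3) c N unfolding is_submodule_def by blast
  ultimately have "(c * a) * g + c * m \<in> N" by (simp only:)
  moreover have "c * m \<in> M" using h(2) c M unfolding is_submodule_def by blast
  ultimately show "c * a \<in> coeff_ideal R M g N"
    using subring_mult[OF R c h(1)] unfolding coeff_ideal_def by blast
qed

lemma coeff_ideal_lift:
  assumes R: "is_subring R" and M: "is_submodule R M M"
    and F: "finite F" "F \<subseteq> coeff_ideal R M g N"
  obtains P where "finite P" "P \<subseteq> N" "\<And>r. r \<in> mspan R F \<Longrightarrow> \<exists>z\<in>mspan R P. \<exists>m\<in>M. z = r * g + m"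
proof -
  have "\<forall>f\<in>F. \<exists>m. m \<in> M \<and> f * g + m \<in> N" using F(2) unfolding coeff_ideal_def by blast
  from bchoice[OF this] obtain m where m: "\<And>f. f \<in> F \<Longrightarrow> m f \<in> M \<and> f * g + m f \<in> N" by blast
  define P where "P = (\<lambda>f. f * g + m f) ` F"
  have "\<exists>z\<in>mspan R P. \<exists>m\<in>M. z = r * g + m" if "r \<in> mspan R F" for r
    using that
  proof induct
    case mspan_zero
    have "0 \<in> M" using M unfolding is_submodule_def by blast
    then show ?case using mspan.mspan_zero by force
  next
    case (mspan_step c f r)
    then obtain z0 m0 where zm: "z0 \<in> mspan R P" "m0 \<in> M" "z0 = r * g + m0" by blast
    have "f * g + m f \<in> P" using mspan_step(2) unfolding P_def by blast
    from mspan.mspan_step[OF mspan_step(1) this zm(1)]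
    have "c * (f * g + m f) + z0 \<in> mspan R P" .
    moreover have "c * m f + m0 \<in> M" using M m mspan_step(1,2) zm(2) unfolding is_submodule_def by blast
    moreover have "c * (f * g + m f) + z0 = (c * f + r) * g + (c * m f + m0)"
      using zm(3) by (simp add: algebra_simps)
    ultimately show ?case by blast
  qed
  moreover have "finite P" "P \<subseteq> N" using F(1) m unfolding P_def by auto
  ultimately show thesis using that by blast
qed

text \<open>The induction step of the Noetherian property for modules: a submodule N of the span of
  insert g G is generated by lifts of generators of its g-coefficient ideal together with
  generators of its intersection with the span of G.\<close>
lemma fg_submodule_insert:
  assumes noeth: "noetherian_ring R"
    and IH: "\<And>N. is_submodule R (mspan R G) N \<Longrightarrow> finitely_generated R N"
    and N: "is_submodule R (mspan R (insert g G)) N"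
  shows "finitely_generated R N"
proof -
  have R: "is_subring R" using noeth unfolding noetherian_ring_def by blast
  have NN: "is_submodule R N N" and NM: "N \<subseteq> mspan R (insert g G)"
    using N unfolding is_submodule_def by auto
  let ?M = "mspan R G"
  have "is_submodule R R (coeff_ideal R ?M g N)" by (rule coeff_ideal_ideal[OF R mspan_submodule[OF R] NN])
  then obtain F where F: "finite F" "F \<subseteq> coeff_ideal R ?M g N" "coeff_ideal R ?M g N = mspan R F"
    using noeth unfolding noetherian_ring_def finitely_generated_def by blast
  obtain P where P: "finite P" "P \<subseteq> N" "\<And>r. r \<in> mspan R F \<Longrightarrow> \<exists>z\<in>mspan R P. \<exists>m\<in>?M. z = r * g + m"
    using coeff_ideal_lift[OF R mspan_submodule[OF R] F(1,2)] by blast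
  have "is_submodule R ?M (N \<inter> ?M)"
    using NN mspan_submodule[OF R, of G] unfolding is_submodule_def by (simp add: Int_iff)
  then have "finitely_generated R (N \<inter> ?M)" by (rule IH)
  then obtain F0 where F0: "finite F0" "F0 \<subseteq> N \<inter> ?M" "N \<inter> ?M = mspan R F0"
    unfolding finitely_generated_def by blast
  have "N \<subseteq> mspan R (F0 \<union> P)"
  proof
    fix n assume n: "n \<in> N"
    then have "n \<in> mspan R (insert g G)" using NM by blast
    then obtain r m0 where rm: "r \<in> R" "m0 \<in> ?M" "n = r * g + m0"
      unfolding mspan_insert[OF R] by blast
    then have "r \<in> mspan R F" using n F(3) unfolding coeff_ideal_def by blast
    then obtain z m where zm: "z \<in> mspan R P" "m \<in> ?M" "z = r * g + m" using P(3) by blast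
    have "z \<in> N" using zm(1) submodule_mspan_subset[OF NN P(2)] by blast
    then have "n - z \<in> N" by (rule submodule_diff[OF R NN n])
    moreover have "n - z = m0 - m" using rm(3) zm(3) by simp
    ultimately have "n - z \<in> N \<inter> ?M" using mspan_diff[OF R rm(2) zm(2)] by simp
    then have "n - z \<in> mspan R (F0 \<union> P)" using F0(3) mspan_mono[of R R F0 "F0 \<union> P"] by blast
    moreover have "z \<in> mspan R (F0 \<union> P)" using zm(1) mspan_mono[of R R P "F0 \<union> P"] by blast
    ultimately have "(n - z) + z \<in> mspan R (F0 \<union> P)" by (rule mspan_add)
    then show "n \<in> mspan R (F0 \<union> P)" by simp
  qed
  moreover have "F0 \<union> P \<subseteq> N" using F0(2) P(2) by blast
  moreover have "mspan R (F0 \<union> P) \<subseteq> N" using submodule_mspan_subset[OF NN] calculation(2) .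
  ultimately show ?thesis using F0(1) P(1) unfolding finitely_generated_def by blast
qed

lemma noetherian_ring_fg_submodule:
  assumes "noetherian_ring R" "finite G" "is_submodule R (mspan R G) N"
  shows "finitely_generated R N"
  using assms(2,3)
proof (induct G arbitrary: N rule: finite_induct)
  case empty
  then have "N = {0}" unfolding is_submodule_def mspan_empty by auto
  then show ?case unfolding finitely_generated_def using mspan_empty by blast
next
  case (insert g G)
  then show ?case using fg_submodule_insert[OF assms(1)] by blast
qed

lemma noetherian_ring_chain_stable:
  assumes noeth: "noetherian_ring R"
    and L: "\<And>d. is_submodule R R (L d)" and chain: "\<And>d. L d \<subseteq> L (Suc d)"
  obtains D where "\<And>d. L d \<subseteq> L D"
proof -
  have mono: "L d \<subseteq> L d'" if "d \<le> d'" for d d' using lift_Suc_mono_le[of L, OF chain that] .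
  let ?U = "\<Union>d. L d"
  have "is_submodule R R ?U" unfolding is_submodule_def
  proof (intro conjI ballI)
    show "?U \<subseteq> R" using L unfolding is_submodule_def by blast
    show "0 \<in> ?U" using L[of 0] unfolding is_submodule_def by blast
  next
    fix a b assume "a \<in> ?U" "b \<in> ?U"
    then obtain d1 d2 where "a \<in> L d1" "b \<in> L d2" by blast
    then have "a \<in> L (max d1 d2)" "b \<in> L (max d1 d2)"
      using mono[of d1 "max d1 d2"] mono[of d2 "max d1 d2"] by auto
    then have "a + b \<in> L (max d1 d2)" using L[of "max d1 d2"] unfolding is_submodule_def by blast
    then show "a + b \<in> ?U" by blast
  next
    fix c a assume "c \<in> R" "a \<in> ?U"
    then obtain d where "c \<in> R" "a \<in> L d" by blast
    then have "c * a \<in> L d" using L[of d] unfolding is_submodule_def by blast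
    then show "c * a \<in> ?U" by blast
  qed
  then obtain F where F: "finite F" "F \<subseteq> ?U" "?U = mspan R F"
    using noeth unfolding noetherian_ring_def finitely_generated_def by blast
  have "\<forall>f\<in>F. \<exists>d. f \<in> L d" using F(2) by blast
  from bchoice[OF this] obtain df where df: "\<And>f. f \<in> F \<Longrightarrow> f \<in> L (df f)" by blast
  define D where "D = Max (insert 0 (df ` F))"
  have "L (df f) \<subseteq> L D" if "f \<in> F" for f
    by (rule mono) (use F(1) that in \<open>simp add: D_def\<close>)
  then have "F \<subseteq> L D" using df by blast
  then have "?U \<subseteq> L D" unfolding F(3) by (rule submodule_mspan_subset[OF L])
  then show thesis using that by blast
qed

definition polys_below :: "'a::ring_1 set \<Rightarrow> 'a \<Rightarrow> nat \<Rightarrow> 'a set" where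
  "polys_below R x d = mspan R ((\<lambda>i. x ^ i) ` {..<d})"

definition polys :: "'a::ring_1 set \<Rightarrow> 'a \<Rightarrow> 'a set" where
  "polys R x = (\<Union>d. polys_below R x d)"

lemma polys_below_mono: "d \<le> d' \<Longrightarrow> polys_below R x d \<subseteq> polys_below R x d'"
  unfolding polys_below_def by (rule mspan_mono) auto

lemma polys_below_0: "polys_below R x 0 = {0}"
  by (simp add: polys_below_def mspan_empty)

lemma subset_by_degree_induct:
  assumes low: "I \<inter> polys_below R x (Suc D) \<subseteq> M"
    and step: "\<And>d p. D < d \<Longrightarrow> p \<in> I \<inter> polys_below R x (Suc d) \<Longrightarrow> \<exists>z\<in>M. p - z \<in> I \<inter> polys_below R x d"
    and M: "\<And>a b. a \<in> M \<Longrightarrow> b \<in> M \<Longrightarrow> a + b \<in> M"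
  shows "I \<inter> polys R x \<subseteq> M"
proof -
  have "I \<inter> polys_below R x d \<subseteq> M" for d
  proof (induct d)
    case 0
    show ?case using low polys_below_mono[of 0 "Suc D" R x] by blast
  next
    case (Suc d)
    show ?case
    proof (cases "d \<le> D")
      case True
      then show ?thesis using low polys_below_mono[of "Suc d" "Suc D" R x] by auto
    next
      case False
      show ?thesis
      proof
        fix p assume p: "p \<in> I \<inter> polys_below R x (Suc d)"
        have "D < d" using False by simp
        then obtain z where "z \<in> M" "p - z \<in> I \<inter> polys_below R x d" using step p by blast
        then have "(p - z) + z \<in> M" using Suc M by blast
        then show "p \<in> M" by simp
      qed
    qed
  qed
  then show ?thesis unfolding polys_def by blast
qed

context
  fixes R :: "'a::ring_1 set" and x :: 'a
  assumes R: "is_subring R" and Rc: "R \<subseteq> ring_center"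
begin

lemma polys_below_Suc:
  "polys_below R x (Suc d) = {r * x ^ d + q | r q. r \<in> R \<and> q \<in> polys_below R x d}"
  unfolding polys_below_def lessThan_Suc image_insert by (rule mspan_insert[OF R])

lemma monomial_mem_polys_below:
  assumes "r \<in> R" "i < d"
  shows "r * x ^ i \<in> polys_below R x d"
proof -
  have "r * x ^ i + 0 \<in> polys_below R x d"
    unfolding polys_below_def by (rule mspan_step) (use assms in \<open>auto intro: mspan_zero\<close>)
  then show ?thesis by simp
qed

lemma polys_below_shift: "q \<in> polys_below R x d \<Longrightarrow> x ^ i * q \<in> polys_below R x (i + d)"
  unfolding polys_below_def
proof (induct rule: mspan.induct)
  case (mspan_step r g q)
  then obtain j where j: "j < d" "g = x ^ j" by auto
  have "x ^ i * (r * g + q) = r * x ^ (i + j) + x ^ i * q"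
    using j ring_center_commute[of r "x ^ i"] mspan_step(1) Rc
    by (auto simp: distrib_left power_add mult.assoc[symmetric])
  moreover have "x ^ (i + j) \<in> (\<lambda>i. x ^ i) ` {..<i + d}" using j by simp
  ultimately show ?case using mspan.mspan_step[OF mspan_step(1) _ mspan_step(4)] by simp
qed (simp add: mspan_zero)

lemma polys_below_mult:
  assumes p: "p \<in> polys_below R x d1" and q: "q \<in> polys_below R x d2"
  shows "p * q \<in> polys_below R x (d1 + d2)"
  using p unfolding polys_below_def
proof (induct rule: mspan.induct)
  case (mspan_step r g p)
  then obtain i where i: "i < d1" "g = x ^ i" by auto
  have "x ^ i * q \<in> polys_below R x (d1 + d2)"
    using polys_below_shift[OF q, of i] polys_below_mono[of "i + d2" "d1 + d2" R x] i by auto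
  then have "r * (x ^ i * q) + p * q \<in> mspan R ((\<lambda>i. x ^ i) ` {..<d1 + d2})"
    using mspan_step mspan_smult[OF R] mspan_add unfolding polys_below_def by blast
  then show ?case using i by (simp add: distrib_right mult.assoc)
qed (simp add: mspan_zero)

lemma is_subring_polys: "is_subring (polys R x)"
  unfolding is_subring_def polys_def
proof (intro conjI ballI)
  show "0 \<in> (\<Union>d. polys_below R x d)" using polys_below_0 by blast
  show "1 \<in> (\<Union>d. polys_below R x d)" using monomial_mem_polys_below[OF subring_1[OF R], of 0 1] by auto
next
  fix a b assume "a \<in> (\<Union>d. polys_below R x d)" "b \<in> (\<Union>d. polys_below R x d)"
  then obtain d1 d2 where d: "a \<in> polys_below R x d1" "b \<in> polys_below R x d2" by blast
  then have "a \<in> polys_below R x (d1 + d2)" "b \<in> polys_below R x (d1 + d2)"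
    using polys_below_mono[of d1 "d1 + d2" R x] polys_below_mono[of d2 "d1 + d2" R x] by auto
  then have "a + b \<in> polys_below R x (d1 + d2)" "a - b \<in> polys_below R x (d1 + d2)"
    unfolding polys_below_def by (auto intro: mspan_add mspan_diff[OF R])
  then show "a + b \<in> (\<Union>d. polys_below R x d)" "a - b \<in> (\<Union>d. polys_below R x d)" by blast+
  show "a * b \<in> (\<Union>d. polys_below R x d)" using polys_below_mult[OF d] by blast
qed

lemma monomial_mem_polys: "r \<in> R \<Longrightarrow> r * x ^ i \<in> polys R x"
  unfolding polys_def using monomial_mem_polys_below[of r i "Suc i"] by blast

lemma subring_hull_insert_eq_polys: "is_subring hull (insert x R) = polys R x"
proof (rule hull_unique)
  show "insert x R \<subseteq> polys R x"
    using monomial_mem_polys[OF subring_1[OF R], of 1] monomial_mem_polys[of _ 0] by auto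
  show "is_subring (polys R x)" by (rule is_subring_polys)
next
  fix X assume X: "insert x R \<subseteq> X" "is_subring X"
  have pow: "x ^ i \<in> X" for i
    by (induct i) (use X in \<open>auto intro: subring_1 subring_mult\<close>)
  have "polys_below R x d \<subseteq> X" for d
    unfolding polys_below_def
    by (rule mspan_least) (use X pow in \<open>auto intro: subring_0 subring_add subring_mult\<close>)
  then show "polys R x \<subseteq> X" unfolding polys_def by blast
qed

lemma coeff_ideal_powers_chain:
  assumes I: "is_submodule (polys R x) (polys R x) I"
  shows "coeff_ideal R (polys_below R x d) (x ^ d) I
           \<subseteq> coeff_ideal R (polys_below R x (Suc d)) (x ^ Suc d) I"
proof
  fix r assume "r \<in> coeff_ideal R (polys_below R x d) (x ^ d) I"
  then obtain q where h: "r \<in> R" "q \<in> polys_below R x d" "r * x ^ d + q \<in> I"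
    unfolding coeff_ideal_def by auto
  have "x \<in> polys R x" using monomial_mem_polys[OF subring_1[OF R], of 1] by simp
  then have "x * (r * x ^ d + q) \<in> I" using I h(3) unfolding is_submodule_def by blast
  moreover have "x * (r * x ^ d + q) = r * x ^ Suc d + x * q"
    using ring_center_commute[of r x] h(1) Rc by (auto simp: distrib_left mult.assoc[symmetric])
  moreover have "x * q \<in> polys_below R x (Suc d)" using polys_below_shift[OF h(2), of 1] by simp
  ultimately show "r \<in> coeff_ideal R (polys_below R x (Suc d)) (x ^ Suc d) I"
    unfolding coeff_ideal_def using h(1) by auto
qed

lemma leading_coeff_lift:
  assumes F: "F \<subseteq> R" and lift: "\<And>f. f \<in> F \<Longrightarrow> pf f - f * x ^ D \<in> polys_below R x D"
    and d: "D \<le> d" and r: "r \<in> mspan R F"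
  shows "\<exists>z\<in>mspan (polys R x) (pf ` F). z - r * x ^ d \<in> polys_below R x d"
  using r
proof induct
  case mspan_zero
  show ?case using mspan.mspan_zero polys_below_0 polys_below_mono[of 0 d R x] by force
next
  case (mspan_step c f r)
  then obtain z where z: "z \<in> mspan (polys R x) (pf ` F)" "z - r * x ^ d \<in> polys_below R x d" by blast
  define k where "k = d - D"
  have c: "c * x ^ k \<in> polys R x" by (rule monomial_mem_polys[OF mspan_step(1)])
  have "x ^ k * (pf f - f * x ^ D) \<in> polys_below R x d"
    using polys_below_shift[OF lift[OF mspan_step(2)], of k] d unfolding k_def by simp
  then have "c * (x ^ k * (pf f - f * x ^ D)) + (z - r * x ^ d) \<in> polys_below R x d"
    using mspan_add mspan_smult[OF R mspan_step(1)] z(2) unfolding polys_below_def by blast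
  moreover have "c * (x ^ k * (f * x ^ D)) = c * (f * x ^ d)"
  proof -
    have "x ^ k * f = f * x ^ k" using ring_center_commute[of f] F mspan_step(2) Rc by auto
    then have "x ^ k * (f * x ^ D) = f * (x ^ k * x ^ D)" by (metis mult.assoc)
    also have "x ^ k * x ^ D = x ^ d" using d by (simp add: k_def flip: power_add)
    finally show ?thesis by simp
  qed
  then have "c * (x ^ k * (pf f - f * x ^ D)) + (z - r * x ^ d)
      = (c * x ^ k * pf f + z) - (c * f + r) * x ^ d"
    by (simp add: algebra_simps)
  moreover have "c * x ^ k * pf f + z \<in> mspan (polys R x) (pf ` F)"
    using mspan.mspan_step[OF c _ z(1)] mspan_step(2) by blast
  ultimately show ?case by auto
qed


lemma leading_coeff_generators:
  assumes noeth: "noetherian_ring R" and I: "is_submodule (polys R x) (polys R x) I"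
  obtains F pf D where "finite F" "F \<subseteq> R" "pf ` F \<subseteq> I"
    "\<And>f. f \<in> F \<Longrightarrow> pf f - f * x ^ D \<in> polys_below R x D"
    "\<And>d. coeff_ideal R (polys_below R x d) (x ^ d) I \<subseteq> mspan R F"
proof -
  define L where "L d = coeff_ideal R (polys_below R x d) (x ^ d) I" for d
  have "R \<subseteq> polys R x" using monomial_mem_polys[of _ 0] by auto
  then have "is_submodule R I I" using I unfolding is_submodule_def by blast
  then have L: "is_submodule R R (L d)" for d
    unfolding L_def polys_below_def by (rule coeff_ideal_ideal[OF R mspan_submodule[OF R]])
  have chain: "L d \<subseteq> L (Suc d)" for d unfolding L_def by (rule coeff_ideal_powers_chain[OF I])
  obtain D where D: "\<And>d. L d \<subseteq> L D"
    using noetherian_ring_chain_stable[of R L, OF noeth L chain] by blast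
  have "finitely_generated R (L D)" using noeth L[of D] unfolding noetherian_ring_def by blast
  then obtain F where F: "finite F" "F \<subseteq> L D" "L D = mspan R F"
    unfolding finitely_generated_def by blast
  have "\<forall>f\<in>F. \<exists>q. q \<in> polys_below R x D \<and> f * x ^ D + q \<in> I"
    using F(2) unfolding L_def coeff_ideal_def by auto
  from bchoice[OF this] obtain q where q: "\<And>f. f \<in> F \<Longrightarrow> q f \<in> polys_below R x D \<and> f * x ^ D + q f \<in> I"
    by blast
  show thesis
  proof (rule that[of F "\<lambda>f. f * x ^ D + q f" D])
    show "F \<subseteq> R" using F(2) unfolding L_def coeff_ideal_def by blast
    show "(\<lambda>f. f * x ^ D + q f) ` F \<subseteq> I" using q by blast
    show "f * x ^ D + q f - f * x ^ D \<in> polys_below R x D" if "f \<in> F" for f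
      using q[OF that] by simp
    show "coeff_ideal R (polys_below R x d) (x ^ d) I \<subseteq> mspan R F" for d
      using D[of d] F(3) unfolding L_def by blast
  qed (rule F(1))
qed

lemma polys_ideal_fg:
  assumes noeth: "noetherian_ring R" and I: "is_submodule (polys R x) (polys R x) I"
  shows "finitely_generated (polys R x) I"
proof -
  let ?P = "polys R x" and ?below = "polys_below R x"
  have RP: "R \<subseteq> ?P" using monomial_mem_polys[of _ 0] by auto
  obtain F pf D where F: "finite F" "F \<subseteq> R" "pf ` F \<subseteq> I"
    and lift: "\<And>f. f \<in> F \<Longrightarrow> pf f - f * x ^ D \<in> ?below D"
    and lead: "\<And>d. coeff_ideal R (?below d) (x ^ d) I \<subseteq> mspan R F"
    by (rule leading_coeff_generators[OF noeth I]) blast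
  have "is_submodule R (?below (Suc D)) (I \<inter> ?below (Suc D))"
    using I RP mspan_submodule[OF R, of "(\<lambda>i. x ^ i) ` {..<Suc D}"]
    unfolding is_submodule_def polys_below_def by (simp add: subset_iff)
  then have "finitely_generated R (I \<inter> ?below (Suc D))"
    unfolding polys_below_def by (rule noetherian_ring_fg_submodule[OF noeth, rotated]) simp
  then obtain H where H: "finite H" "H \<subseteq> I" "I \<inter> ?below (Suc D) = mspan R H"
    unfolding finitely_generated_def by blast
  define K where "K = H \<union> pf ` F"
  have KI: "K \<subseteq> I" using H(2) F(3) unfolding K_def by blast
  have "I \<inter> ?P \<subseteq> mspan ?P K"
  proof (rule subset_by_degree_induct)
    show "I \<inter> ?below (Suc D) \<subseteq> mspan ?P K"
      unfolding H(3) K_def by (rule mspan_mono[OF RP]) simp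
  next
    fix d p assume d: "D < d" and p: "p \<in> I \<inter> ?below (Suc d)"
    then obtain r q where rq: "r \<in> R" "q \<in> ?below d" "p = r * x ^ d + q"
      unfolding polys_below_Suc by blast
    then have "r \<in> coeff_ideal R (?below d) (x ^ d) I" using p unfolding coeff_ideal_def by blast
    then have "r \<in> mspan R F" using lead by blast
    with leading_coeff_lift[of F pf D d r, OF F(2) lift] d
    obtain z where z: "z \<in> mspan ?P (pf ` F)" "z - r * x ^ d \<in> ?below d" by auto
    have zK: "z \<in> mspan ?P K" using z(1) mspan_mono[of ?P ?P "pf ` F" K] unfolding K_def by blast
    have "z \<in> I" using z(1) submodule_mspan_subset[OF I F(3)] by blast
    then have "p - z \<in> I" using submodule_diff[OF is_subring_polys I] p by blast
    moreover have "q - (z - r * x ^ d) \<in> ?below d"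
      using mspan_diff[OF R] rq(2) z(2) unfolding polys_below_def by blast
    then have "p - z \<in> ?below d" using rq(3) by (simp add: algebra_simps)
    ultimately show "\<exists>z\<in>mspan ?P K. p - z \<in> I \<inter> ?below d" using zK by blast
  qed (rule mspan_add)
  moreover have "mspan ?P K \<subseteq> I" by (rule submodule_mspan_subset[OF I KI])
  moreover have "I \<subseteq> ?P" using I unfolding is_submodule_def by blast
  ultimately have "I = mspan ?P K" by blast
  moreover have "finite K" using H(1) F(1) unfolding K_def by blast
  ultimately show ?thesis using KI unfolding finitely_generated_def by blast
qed

end

theorem noetherian_ring_polys:
  assumes "noetherian_ring R" "R \<subseteq> ring_center"
  shows "noetherian_ring (polys R x)"
  using assms is_subring_polys polys_ideal_fg unfolding noetherian_ring_def by blast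

lemma int_ideal_principal:
  fixes J :: "int set"
  assumes zero: "0 \<in> J" and diff: "\<And>a b. a \<in> J \<Longrightarrow> b \<in> J \<Longrightarrow> a - b \<in> J"
    and mult: "\<And>a k. a \<in> J \<Longrightarrow> k * a \<in> J"
  shows "\<exists>g\<in>J. \<forall>a\<in>J. g dvd a"
proof (cases "J \<subseteq> {0}")
  case True
  then show ?thesis using zero by (intro bexI[of _ 0]) auto
next
  case False
  then obtain a where a: "a \<in> J" "a \<noteq> 0" by blast
  have "\<bar>a\<bar> \<in> J" using a(1) mult[OF a(1), of "- 1"] by (cases "0 \<le> a") simp_all
  then have ex: "\<exists>n. 0 < n \<and> int n \<in> J" using a(2) by (intro exI[of _ "nat \<bar>a\<bar>"]) simp
  define n where "n = (LEAST n. 0 < n \<and> int n \<in> J)"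
  have n: "0 < n" "int n \<in> J" using LeastI_ex[OF ex] unfolding n_def by auto
  show ?thesis
  proof (intro bexI ballI)
    fix b assume b: "b \<in> J"
    have "b mod int n = b - (b div int n) * int n" by (simp add: minus_div_mult_eq_mod)
    then have mod_J: "b mod int n \<in> J" using diff[OF b mult[OF n(2), of "b div int n"]] by simp
    have "b mod int n = 0"
    proof (rule ccontr)
      assume "b mod int n \<noteq> 0"
      moreover have "0 \<le> b mod int n" using n(1) by simp
      ultimately have "0 < b mod int n" by linarith
      then have "0 < nat (b mod int n) \<and> int (nat (b mod int n)) \<in> J" using mod_J by simp
      then have "n \<le> nat (b mod int n)" unfolding n_def by (rule Least_le)
      then show False using pos_mod_bound[of "int n" b] n(1) by linarith
    qed
    then show "int n dvd b" by (simp add: dvd_eq_mod_eq_0)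
  qed (rule n(2))
qed

lemma noetherian_ring_Ints: "noetherian_ring \<int>"
  unfolding noetherian_ring_def
proof (intro conjI allI impI)
  show "is_subring \<int>" by (rule is_subring_Ints)
  fix I :: "'a set" assume I: "is_submodule \<int> \<int> I"
  note I0 = submodule_zero[OF I] and I_Ints = submodule_subset[OF I] and I_mult = submodule_smult[OF I]
  define J where "J = {k. (of_int k :: 'a) \<in> I}"
  have "\<exists>g\<in>J. \<forall>a\<in>J. g dvd a"
  proof (rule int_ideal_principal)
    show "0 \<in> J" using I0 unfolding J_def by simp
    show "a - b \<in> J" if "a \<in> J" "b \<in> J" for a b
      using submodule_diff[OF is_subring_Ints I] that unfolding J_def by simp
    show "k * a \<in> J" if "a \<in> J" for a k
      using I_mult[of "of_int k" "of_int a"] that unfolding J_def by simp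
  qed
  then obtain g where g: "of_int g \<in> I" "\<And>k. of_int k \<in> I \<Longrightarrow> g dvd k"
    unfolding J_def by blast
  have "I \<subseteq> mspan \<int> {of_int g}"
  proof
    fix i assume i: "i \<in> I"
    then obtain k where k: "i = of_int k" using I_Ints by (blast elim: Ints_cases)
    then have "g dvd k" using g(2) i by simp
    then obtain m where "k = m * g" by (metis dvdE mult.commute)
    then have "i = of_int m * of_int g + 0" using k by simp
    also have "\<dots> \<in> mspan \<int> {of_int g}" by (rule mspan_step) (simp_all add: mspan_zero)
    finally show "i \<in> mspan \<int> {of_int g}" .
  qed
  moreover have "mspan \<int> {of_int g} \<subseteq> I" using g(1) by (intro submodule_mspan_subset[OF I]) simp
  ultimately have "I = mspan \<int> {of_int g}" by (rule subset_antisym)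
  then show "finitely_generated \<int> I" using g(1) unfolding finitely_generated_def by blast
qed

lemma noetherian_ring_subring_hull:
  assumes "finite Y" "Y \<subseteq> ring_center"
  shows "noetherian_ring (is_subring hull Y)"
  using assms
proof (induct Y rule: finite_induct)
  case empty
  show ?case unfolding subring_hull_empty by (rule noetherian_ring_Ints)
next
  case (insert y Y)
  let ?R = "is_subring hull Y"
  have Rc: "?R \<subseteq> ring_center" using insert(4) by (intro subring_hull_subset_center) simp
  have "is_subring hull (insert y Y) = is_subring hull (insert y ?R)"
    using hull_Un_right[of is_subring "{y}" Y] by simp
  also have "\<dots> = polys ?R y" by (rule subring_hull_insert_eq_polys[OF is_subring_hull Rc])
  finally show ?case using noetherian_ring_polys[OF _ Rc] insert by simp
qed

lemma is_subring_mspan: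
  assumes C: "is_subring C" "C \<subseteq> ring_center" and one: "1 \<in> mspan C S"
    and mult: "\<And>s s'. s \<in> S \<Longrightarrow> s' \<in> S \<Longrightarrow> s * s' \<in> mspan C S"
  shows "is_subring (mspan C S)"
  unfolding is_subring_def
proof (intro conjI ballI)
  fix x y assume "x \<in> mspan C S" "y \<in> mspan C S"
  then show "x + y \<in> mspan C S" "x - y \<in> mspan C S" "x * y \<in> mspan C S"
    by (simp_all add: mspan_add mspan_diff[OF C(1)] mspan_mult[OF C mult])
qed (simp_all add: one mspan_zero)

lemma subring_hull_insert_quadratic:
  assumes R: "is_subring R" "R \<subseteq> ring_center" and quad: "a * a \<in> mspan R {1, a}"
  shows "is_subring hull (insert a R) = mspan R {1, a}"
proof (rule hull_unique)
  have "r * 1 + 0 \<in> mspan R {1, a}" if "r \<in> R" for r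
    by (rule mspan_step) (simp_all add: that mspan_zero)
  then have "r \<in> mspan R {1, a}" if "r \<in> R" for r using that by simp
  then show "insert a R \<subseteq> mspan R {1, a}" using mspan_gen[OF subring_1[OF R(1)]] by blast
  show "is_subring (mspan R {1, a})"
    by (rule is_subring_mspan[OF R]) (use quad mspan_gen[OF subring_1[OF R(1)]] in auto)
next
  fix X assume "insert a R \<subseteq> X" "is_subring X"
  then show "mspan R {1, a} \<subseteq> X"
    by (intro mspan_least) (auto intro: subring_0 subring_1 subring_add subring_mult)
qed

lemma fg_subring_hull_quadratic:
  assumes R: "is_subring R" "R \<subseteq> ring_center" and A: "finite A" "A \<subseteq> ring_center"
    and quad: "\<And>a. a \<in> A \<Longrightarrow> a * a \<in> mspan R {1, a}"
  shows "finitely_generated R (is_subring hull (R \<union> A))"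
  using A quad
proof (induct A rule: finite_induct)
  case empty
  show ?case unfolding finitely_generated_def using R(1) subring_1[OF R(1)]
    by (intro exI[of _ "{1}"]) (simp add: hull_same mspan_singleton_one)
next
  case (insert a A)
  let ?R' = "is_subring hull (R \<union> A)" and ?R'' = "is_subring hull (R \<union> insert a A)"
  have "finitely_generated R ?R'" by (rule insert(3)) (use insert(4,5) in simp_all)
  then obtain H where H: "finite H" "H \<subseteq> ?R'" "?R' = mspan R H"
    unfolding finitely_generated_def by blast
  have R'c: "?R' \<subseteq> ring_center" using R(2) insert(4) by (intro subring_hull_subset_center) simp
  have RR': "R \<subseteq> ?R'" using hull_subset[of "R \<union> A" is_subring] by blast
  have "a * a \<in> mspan R {1, a}" by (rule insert(5)) simp
  then have "a * a \<in> mspan ?R' {1, a}" using mspan_mono[OF RR', of "{1, a}" "{1, a}"] by blast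
  have "?R'' = is_subring hull (insert a ?R')"
    using hull_Un_right[of is_subring "{a}" "R \<union> A"] by simp
  also have "\<dots> = mspan ?R' {1, a}"
    using \<open>a * a \<in> mspan ?R' {1, a}\<close> by (rule subring_hull_insert_quadratic[OF is_subring_hull R'c])
  also have "\<dots> = mspan R ((\<lambda>(h, g). h * g) ` (H \<times> {1, a}))"
    by (rule mspan_tower[OF R(1) RR' H(2,3)]) (rule subring_mult[OF is_subring_hull])
  finally have eq: "?R'' = mspan R ((\<lambda>(h, g). h * g) ` (H \<times> {1, a}))" .
  have "h * g \<in> ?R''" if "h \<in> H" "g \<in> {1, a}" for h g
  proof -
    have "?R' \<subseteq> ?R''" by (rule hull_mono) blast
    then have "h \<in> ?R''" using that(1) H(2) by blast
    moreover have "g \<in> ?R''"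
      using that(2) subring_1[OF is_subring_hull] hull_inc[of a "R \<union> insert a A" is_subring] by blast
    ultimately show ?thesis by (rule subring_mult[OF is_subring_hull])
  qed
  then have "(\<lambda>(h, g). h * g) ` (H \<times> {1, a}) \<subseteq> ?R''" by auto
  moreover have "finite ((\<lambda>(h, g). h * g) ` (H \<times> {1, a}))" using H(1) by simp
  ultimately show ?case unfolding finitely_generated_def using eq by (intro exI conjI)
qed

locale involution =
  fixes bar :: "'a::ring_1 \<Rightarrow> 'a"
  assumes is_involution: "is_involution bar"
begin

lemma bar_add: "bar (t + s) = bar t + bar s"
  and bar_mult: "bar (t * s) = bar s * bar t"
  and bar_bar: "bar (bar t) = t"
  using is_involution unfolding is_involution_def by blast+

lemma bar_0: "bar 0 = 0"
  using bar_add[of 0 0] by simp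

lemma bar_uminus: "bar (- t) = - bar t"
  using bar_add[of "- t" t] bar_0 by (simp add: eq_neg_iff_add_eq_0)

lemma bar_diff: "bar (t - s) = bar t - bar s"
  using bar_add[of t "- s"] bar_uminus[of s] by simp

lemma bar_1: "bar 1 = 1"
  using bar_mult[of "bar 1" 1] by (simp add: bar_bar)

lemma bar_ring_center:
  assumes "a \<in> ring_center"
  shows "bar a \<in> ring_center"
  unfolding ring_center_def
proof (intro CollectI allI)
  fix y
  have "bar a * y = bar (bar y * a)" by (simp add: bar_mult bar_bar)
  also have "\<dots> = bar (a * bar y)" using ring_center_commute[OF assms] by simp
  also have "\<dots> = y * bar a" by (simp add: bar_mult bar_bar)
  finally show "bar a * y = y * bar a" .
qed

lemma subring_hull_bar_closed:
  assumes "bar ` X \<subseteq> X"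
  shows "bar ` (is_subring hull X) \<subseteq> is_subring hull X"
proof -
  define H where "H = is_subring hull X"
  have H: "is_subring H" unfolding H_def by (rule is_subring_hull)
  have "is_subring {x. bar x \<in> H}"
    unfolding is_subring_def
  proof (intro conjI ballI)
    show "0 \<in> {x. bar x \<in> H}" "1 \<in> {x. bar x \<in> H}" using H by (simp_all add: bar_0 bar_1 subring_0 subring_1)
    fix x y assume "x \<in> {x. bar x \<in> H}" "y \<in> {x. bar x \<in> H}"
    then have x: "bar x \<in> H" and y: "bar y \<in> H" by simp_all
    show "x + y \<in> {x. bar x \<in> H}" using subring_add[OF H x y] by (simp add: bar_add)
    show "x - y \<in> {x. bar x \<in> H}" using subring_diff[OF H x y] by (simp add: bar_diff)
    show "x * y \<in> {x. bar x \<in> H}" using subring_mult[OF H y x] by (simp add: bar_mult)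
  qed
  moreover have "X \<subseteq> {x. bar x \<in> H}" using assms hull_subset[of X is_subring] unfolding H_def by blast
  ultimately have "H \<subseteq> {x. bar x \<in> H}" unfolding H_def by (rule hull_minimal[rotated])
  then show ?thesis unfolding H_def by blast
qed

lemma mspan_bar_closed:
  assumes C: "is_subring C" "C \<subseteq> ring_center" "bar ` C \<subseteq> C"
    and S: "\<And>s. s \<in> S \<Longrightarrow> bar s \<in> mspan C S"
  shows "bar ` mspan C S \<subseteq> mspan C S"
proof clarify
  fix p assume "p \<in> mspan C S"
  then show "bar p \<in> mspan C S"
  proof induct
    case (mspan_step r g y)
    have br: "bar r \<in> C" using C(3) mspan_step(1) by blast
    have "bar g * bar r = bar r * bar g" using ring_center_commute[of "bar r"] br C(2) by auto
    then have "bar g * bar r \<in> mspan C S" using mspan_smult[OF C(1) br S[OF mspan_step(2)]] by simp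
    then show ?case using mspan_step(4) mspan_add by (simp add: bar_add bar_mult)
  qed (simp add: bar_0 mspan_zero)
qed

lemma norm_sums_add:
  assumes "x \<in> norm_sums bar C" and y: "y \<in> norm_sums bar C"
  shows "x + y \<in> norm_sums bar C"
  using assms(1)
proof induct
  case (plus c x)
  then show ?case using norm_sums.plus[OF plus(1,3)] by (simp only: add.assoc)
next
  case (minus c x)
  then show ?case using norm_sums.minus[OF minus(1,3)] by (simp only: add.assoc)
qed (simp add: y)

lemma norm_sums_uminus: "x \<in> norm_sums bar C \<Longrightarrow> - x \<in> norm_sums bar C"
proof (induct rule: norm_sums.induct)
  case (plus c x)
  then show ?case using norm_sums.minus[of c C "- x" bar] by (simp add: add.commute)
next
  case (minus c x)
  then show ?case using norm_sums.plus[of c C "- x" bar] by (simp add: add.commute)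
qed (simp add: norm_sums.zero)

lemma norm_mem_norm_sums: "c \<in> C \<Longrightarrow> c * bar c \<in> norm_sums bar C"
  using norm_sums.plus[of c C 0 bar] norm_sums.zero[of bar C] by simp

lemma norm_mult:
  assumes "c \<in> ring_center" "d \<in> ring_center"
  shows "c * bar c * (d * bar d) = (c * d) * bar (c * d)"
proof -
  have bc: "bar c \<in> ring_center" using bar_ring_center assms(1) by blast
  have "c * bar c * (d * bar d) = c * (bar c * d) * bar d" by (simp add: mult.assoc)
  also have "\<dots> = c * d * (bar c * bar d)" using ring_center_commute[OF bc, of d] by (simp add: mult.assoc)
  also have "\<dots> = c * d * (bar d * bar c)" using ring_center_commute[OF bc, of "bar d"] by simp
  finally show ?thesis by (simp add: bar_mult)
qed

lemma norm_sums_mult: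
  assumes C: "is_subring C" "C \<subseteq> ring_center"
    and x: "x \<in> norm_sums bar C" and y: "y \<in> norm_sums bar C"
  shows "x * y \<in> norm_sums bar C"
proof -
  have norm_times: "c * bar c * y \<in> norm_sums bar C" if c: "c \<in> C" for c
    using y
  proof induct
    case (plus d y)
    have "c * bar c * (d * bar d) = (c * d) * bar (c * d)" using norm_mult c plus(1) C(2) by blast
    then have "c * bar c * (d * bar d + y) = (c * d) * bar (c * d) + c * bar c * y"
      by (simp only: distrib_left)
    then show ?case using norm_sums.plus[OF subring_mult[OF C(1) c plus(1)] plus(3)] by simp
  next
    case (minus d y)
    have "c * bar c * (d * bar d) = (c * d) * bar (c * d)" using norm_mult c minus(1) C(2) by blast
    then have "c * bar c * (- (d * bar d) + y) = - ((c * d) * bar (c * d)) + c * bar c * y"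
      by (simp only: distrib_left mult_minus_right)
    then show ?case using norm_sums.minus[OF subring_mult[OF C(1) c minus(1)] minus(3)] by simp
  qed (simp add: norm_sums.zero)
  from x show ?thesis
  proof induct
    case (plus c x)
    have "(c * bar c + x) * y = c * bar c * y + x * y" by (simp only: distrib_right)
    then show ?case using norm_times[OF plus(1)] plus(3) norm_sums_add by simp
  next
    case (minus c x)
    have "(- (c * bar c) + x) * y = - (c * bar c * y) + x * y" by (simp only: distrib_right mult_minus_left)
    then show ?case using norm_sums_add[OF norm_sums_uminus[OF norm_times[OF minus(1)]] minus(3)]
      by (simp only:)
  qed (simp add: norm_sums.zero)
qed

lemma is_subring_norm_sums:
  assumes "is_subring C" "C \<subseteq> ring_center"
  shows "is_subring (norm_sums bar C)"
  unfolding is_subring_def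
proof (intro conjI ballI)
  show "0 \<in> norm_sums bar C" by (rule norm_sums.zero)
  show "1 \<in> norm_sums bar C" using norm_mem_norm_sums[OF subring_1[OF assms(1)]] by (simp add: bar_1)
  fix x y assume x: "x \<in> norm_sums bar C" and y: "y \<in> norm_sums bar C"
  show "x + y \<in> norm_sums bar C" by (rule norm_sums_add[OF x y])
  show "x - y \<in> norm_sums bar C" using norm_sums_add[OF x norm_sums_uminus[OF y]] by simp
  show "x * y \<in> norm_sums bar C" by (rule norm_sums_mult[OF assms x y])
qed

lemma norm_sums_subset:
  assumes C: "is_subring C" "bar ` C \<subseteq> C"
  shows "norm_sums bar C \<subseteq> C"
proof
  fix x assume "x \<in> norm_sums bar C"
  then show "x \<in> C"
  proof induct
    case (plus c x)
    then show ?case using C by (blast intro: subring_add subring_mult)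
  next
    case (minus c x)
    then show ?case using C by (blast intro: subring_add subring_mult subring_uminus)
  qed (rule subring_0[OF C(1)])
qed

text \<open>Traces are norm sums: c + bar c = (1 + c)(1 + bar c) - 1 bar 1 - c bar c.\<close>
lemma trace_mem_norm_sums:
  assumes C: "is_subring C" and c: "c \<in> C"
  shows "c + bar c \<in> norm_sums bar C"
proof -
  have "- (1 * bar 1) + (- (c * bar c) + 0) \<in> norm_sums bar C"
    by (intro norm_sums.minus norm_sums.zero subring_1[OF C] c)
  then have "(1 + c) * bar (1 + c) + (- (1 * bar 1) + (- (c * bar c) + 0)) \<in> norm_sums bar C"
    by (rule norm_sums.plus[OF subring_add[OF C subring_1[OF C] c]])
  then show ?thesis by (simp add: bar_add bar_1 algebra_simps)
qed

lemma square_mem_mspan_trace_norm: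
  assumes R: "is_subring R" and a: "a \<in> ring_center" "a + bar a \<in> R" "a * bar a \<in> R"
  shows "a * a \<in> mspan R {1, a}"
proof -
  have "(a + bar a) * a + ((- (a * bar a)) * 1 + 0) \<in> mspan R {1, a}"
    by (intro mspan_step mspan_zero) (simp_all add: a subring_uminus[OF R])
  moreover have "bar a * a = a * bar a" using ring_center_commute[OF a(1)] by simp
  then have "(a + bar a) * a + ((- (a * bar a)) * 1 + 0) = a * a" by (simp add: distrib_right)
  ultimately show ?thesis by simp
qed

text \<open>The subring generated by the traces and norms of the elements of A is Noetherian, lies in
  the norm sums of the subring C generated by A, and C is integral (quadratic) over it.\<close>
lemma noetherian_subring_of_norm_sums:
  assumes A: "finite A" "A \<subseteq> ring_center" "bar ` A \<subseteq> A"
  obtains R where "noetherian_ring R" "R \<subseteq> norm_sums bar (is_subring hull A)"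
    "finitely_generated R (is_subring hull A)"
proof -
  let ?C = "is_subring hull A"
  have Cc: "?C \<subseteq> ring_center" by (rule subring_hull_subset_center[OF A(2)])
  define Y where "Y = (\<lambda>a. a + bar a) ` A \<union> (\<lambda>a. a * bar a) ` A"
  let ?R = "is_subring hull Y"
  have "a + bar a \<in> ring_center" "a * bar a \<in> ring_center" if "a \<in> A" for a
    using that A(2) bar_ring_center subring_add[OF is_subring_ring_center]
      subring_mult[OF is_subring_ring_center] by blast+
  then have Y: "finite Y" "Y \<subseteq> ring_center" using A(1) unfolding Y_def by auto
  have "Y \<subseteq> norm_sums bar ?C"
    using trace_mem_norm_sums[OF is_subring_hull] norm_mem_norm_sums hull_inc[of _ A is_subring]
    unfolding Y_def by blast
  then have RN: "?R \<subseteq> norm_sums bar ?C"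
    using is_subring_norm_sums[OF is_subring_hull Cc] by (rule hull_minimal)
  have "?R \<subseteq> ?C" using RN norm_sums_subset[OF is_subring_hull subring_hull_bar_closed[OF A(3)]] by blast
  then have "?C = is_subring hull (?R \<union> A)"
    using hull_mono[of A "?R \<union> A" is_subring] hull_minimal[of "?R \<union> A" ?C is_subring]
      hull_subset[of A is_subring] is_subring_hull[of A] by blast
  moreover have "finitely_generated ?R (is_subring hull (?R \<union> A))"
  proof (rule fg_subring_hull_quadratic[OF is_subring_hull subring_hull_subset_center[OF Y(2)] A(1,2)])
    fix a assume "a \<in> A"
    then have "a + bar a \<in> ?R" "a * bar a \<in> ?R" using hull_inc[of _ Y is_subring] unfolding Y_def by blast+
    then show "a * a \<in> mspan ?R {1, a}" using A(2) \<open>a \<in> A\<close>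
      by (intro square_mem_mspan_trace_norm[OF is_subring_hull]) auto
  qed
  ultimately show thesis using that noetherian_ring_subring_hull[OF Y] RN by simp
qed

end

lemma noetherian_module_mspan:
  assumes noeth: "noetherian_ring R" and fg: "finitely_generated R C" and C: "is_subring C"
    and C': "is_subring C'" "R \<subseteq> C'" "C' \<subseteq> C" and S: "finite S"
  shows "noetherian_module C' (mspan C S)"
proof -
  have R: "is_subring R" using noeth unfolding noetherian_ring_def by blast
  obtain H where H: "finite H" "H \<subseteq> C" "C = mspan R H" using fg unfolding finitely_generated_def by blast
  have tower: "mspan C S = mspan R ((\<lambda>(h, g). h * g) ` (H \<times> S))"
    by (rule mspan_tower[OF R _ H(2,3)]) (use C' subring_mult[OF C] in blast)+
  show ?thesis unfolding noetherian_module_def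
  proof (intro conjI allI impI)
    show "is_submodule C' (mspan C S) (mspan C S)"
      using mspan_submodule[OF C, of S] C'(3) unfolding is_submodule_def by blast
    fix N assume N: "is_submodule C' (mspan C S) N"
    then have "is_submodule R (mspan R ((\<lambda>(h, g). h * g) ` (H \<times> S))) N"
      using C'(2) tower unfolding is_submodule_def by blast
    then have "finitely_generated R N"
      by (rule noetherian_ring_fg_submodule[OF noeth, rotated]) (simp add: H(1) S)
    then obtain F where F: "finite F" "F \<subseteq> N" "N = mspan R F" unfolding finitely_generated_def by blast
    have "mspan R F \<subseteq> mspan C' F" using C'(2) by (rule mspan_mono) simp
    moreover have "mspan C' F \<subseteq> N" by (rule submodule_mspan_subset[OF N F(2)])
    ultimately have "N = lin_span C' F" using F(3) lin_span_eq_mspan[OF F(1) C'(1)] by blast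
    then show "\<exists>G. finite G \<and> G \<subseteq> N \<and> N = lin_span C' G" using F(1,2) by blast
  qed
qed

lemma subset_center_of_mspan:
  assumes C: "is_subring C" "C \<subseteq> ring_center" and one: "1 \<in> mspan C S"
  shows "C \<subseteq> center_of (mspan C S)"
proof
  fix c assume c: "c \<in> C"
  then have "c * 1 \<in> mspan C S" by (rule mspan_smult[OF C(1) _ one])
  then show "c \<in> center_of (mspan C S)"
    unfolding center_of_def using ring_center_commute c C(2) by auto
qed

context involution
begin

lemma bar_closure:
  assumes "finite X" "X \<subseteq> ring_center"
  shows "finite (X \<union> bar ` X)" "X \<union> bar ` X \<subseteq> ring_center" "bar ` (X \<union> bar ` X) \<subseteq> X \<union> bar ` X"
  using assms bar_ring_center by (auto simp: bar_bar image_Un)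

lemma mspan_subring_hull_properties:
  fixes A S
  defines "T \<equiv> mspan (is_subring hull A) S"
  assumes A: "finite A" "A \<subseteq> ring_center" "bar ` A \<subseteq> A" and S: "finite S"
    and one: "1 \<in> T" and mult: "\<And>s s'. s \<in> S \<Longrightarrow> s' \<in> S \<Longrightarrow> s * s' \<in> T"
    and bar: "\<And>s. s \<in> S \<Longrightarrow> bar s \<in> T"
  shows "is_subring T" "bar ` T \<subseteq> T"
    "\<exists>C'. is_subring C' \<and> C' \<subseteq> center_of T \<and> noetherian_module (norm_sums bar C') T"
proof -
  let ?C = "is_subring hull A"
  have C: "is_subring ?C" "?C \<subseteq> ring_center" "bar ` ?C \<subseteq> ?C"
    using is_subring_hull subring_hull_subset_center[OF A(2)] subring_hull_bar_closed[OF A(3)] by blast+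
  show "is_subring T" unfolding T_def by (rule is_subring_mspan[OF C(1,2) one[unfolded T_def] mult[unfolded T_def]])
  show "bar ` T \<subseteq> T" unfolding T_def by (rule mspan_bar_closed[OF C bar[unfolded T_def]])
  obtain R where R: "noetherian_ring R" "R \<subseteq> norm_sums bar ?C" "finitely_generated R ?C"
    using noetherian_subring_of_norm_sums[OF A] by blast
  have "noetherian_module (norm_sums bar ?C) T" unfolding T_def
    by (rule noetherian_module_mspan[OF R(1,3) C(1) is_subring_norm_sums[OF C(1,2)] R(2)
          norm_sums_subset[OF C(1,3)] S])
  then show "\<exists>C'. is_subring C' \<and> C' \<subseteq> center_of T \<and> noetherian_module (norm_sums bar C') T"
    using C(1) subset_center_of_mspan[OF C(1,2) one[unfolded T_def]] unfolding T_def by blast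
qed

end

lemma almost_commutative_coeffs:
  assumes "almost_commutative TYPE('a::ring_1)"
  shows "\<exists>(S :: 'a set) coef. finite S \<and> (\<forall>t. \<forall>s\<in>S. coef t s \<in> ring_center) \<and>
           (\<forall>t. t = (\<Sum>s\<in>S. coef t s * s))"
proof -
  obtain S :: "'a set" where S: "finite S"
    "\<forall>t. \<exists>c. (\<forall>s\<in>S. c s \<in> ring_center) \<and> t = (\<Sum>s\<in>S. c s * s)"
    using assms unfolding almost_commutative_def by blast
  from choice[OF S(2)] obtain coef where "\<forall>t. (\<forall>s\<in>S. coef t s \<in> ring_center) \<and> t = (\<Sum>s\<in>S. coef t s * s)"
    by blast
  then show ?thesis using S(1) by blast
qed

lemma mem_mspan_coeffs:
  assumes "finite S" "is_subring C" "\<And>s. s \<in> S \<Longrightarrow> coef s \<in> C"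
  shows "(\<Sum>s\<in>S. coef s * s) \<in> mspan C S"
  using lin_span_eq_mspan[OF assms(1,2)] assms(3) unfolding lin_span_def by blast

theorem lemma4p13:
  fixes bar :: "'a::ring_1 \<Rightarrow> 'a" and lam :: 'a
  assumes "(1::'a) \<noteq> 0"
    and "almost_commutative TYPE('a)"
    and "is_involution bar"
    and "lam \<in> ring_center"
  shows "\<exists>\<T> :: 'a set set.
           \<T> \<noteq> {} \<and>
           (\<forall>A\<in>\<T>. \<forall>B\<in>\<T>. \<exists>D\<in>\<T>. A \<union> B \<subseteq> D) \<and>
           \<Union>\<T> = UNIV \<and>
           (\<forall>Tj\<in>\<T>. is_subring Tj \<and> bar ` Tj \<subseteq> Tj \<and> lam \<in> Tj \<and>
              (\<exists>C'. is_subring C' \<and> C' \<subseteq> center_of Tj \<and>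
                    noetherian_module (norm_sums bar C') Tj))"
proof -
  interpret involution bar by (rule involution.intro) (rule assms(3))
  obtain S :: "'a set" and coef :: "'a \<Rightarrow> 'a \<Rightarrow> 'a"
    where S: "finite S" and coef: "\<forall>t. \<forall>s\<in>S. coef t s \<in> ring_center"
      and expand: "\<forall>t. t = (\<Sum>s\<in>S. coef t s * s)"
    using almost_commutative_coeffs[OF assms(2)] by iprover
  define T where "T A = mspan (is_subring hull A) S" for A
  have mem_T: "t \<in> T A" if "coef t ` S \<subseteq> A" for t A
  proof (subst spec[OF expand, of t])
    show "(\<Sum>s\<in>S. coef t s * s) \<in> T A" unfolding T_def
      by (rule mem_mspan_coeffs[OF S is_subring_hull]) (use that hull_subset[of A is_subring] in blast)
  qed
  define G where "G = {1, lam} \<union> (\<lambda>(s, s'). s * s') ` (S \<times> S) \<union> bar ` S"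
  define K where "K = (\<Union>t\<in>G. coef t ` S)"
  define \<A> where "\<A> = {A. finite A \<and> A \<subseteq> ring_center \<and> bar ` A \<subseteq> A \<and> K \<subseteq> A}"
  have K: "finite K" "K \<subseteq> ring_center" unfolding K_def G_def using S coef by auto
  have closure: "K \<union> X \<union> bar ` (K \<union> X) \<in> \<A>" if "finite X" "X \<subseteq> ring_center" for X
    using bar_closure[of "K \<union> X"] that K unfolding \<A>_def by blast
  have props: "is_subring (T A) \<and> bar ` T A \<subseteq> T A \<and> lam \<in> T A \<and>
      (\<exists>C'. is_subring C' \<and> C' \<subseteq> center_of (T A) \<and> noetherian_module (norm_sums bar C') (T A))"
    if "A \<in> \<A>" for A
  proof -
    have A: "finite A" "A \<subseteq> ring_center" "bar ` A \<subseteq> A" "K \<subseteq> A" using that unfolding \<A>_def by auto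
    have gen: "t \<in> T A" if "t \<in> G" for t
      by (rule mem_T) (use that A(4) in \<open>auto simp: K_def\<close>)
    have "lam \<in> T A" and one: "1 \<in> T A" and mult: "\<And>s s'. s \<in> S \<Longrightarrow> s' \<in> S \<Longrightarrow> s * s' \<in> T A"
      and bar: "\<And>s. s \<in> S \<Longrightarrow> bar s \<in> T A" by (intro gen; force simp: G_def)+
    with mspan_subring_hull_properties[OF A(1-3) S one[unfolded T_def] mult[unfolded T_def] bar[unfolded T_def]]
    show ?thesis unfolding T_def by blast
  qed
  show ?thesis
  proof (intro exI[of _ "T ` \<A>"] conjI)
    show "T ` \<A> \<noteq> {}" using closure[of "{}"] by blast
    show "\<forall>A\<in>T ` \<A>. \<forall>B\<in>T ` \<A>. \<exists>D\<in>T ` \<A>. A \<union> B \<subseteq> D"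
    proof (intro ballI)
      fix A B assume "A \<in> T ` \<A>" "B \<in> T ` \<A>"
      then obtain A' B' where "A' \<in> \<A>" "B' \<in> \<A>" "A = T A'" "B = T B'" by blast
      moreover have "A' \<union> B' \<in> \<A>" using calculation(1,2) unfolding \<A>_def by blast
      moreover have "T A' \<union> T B' \<subseteq> T (A' \<union> B')" unfolding T_def by (intro Un_least mspan_mono hull_mono) auto
      ultimately show "\<exists>D\<in>T ` \<A>. A \<union> B \<subseteq> D" by blast
    qed
    show "\<Union>(T ` \<A>) = UNIV"
    proof (intro set_eqI iffI)
      fix t :: 'a
      have "finite (coef t ` S)" "coef t ` S \<subseteq> ring_center" using S coef by auto
      then have "K \<union> coef t ` S \<union> bar ` (K \<union> coef t ` S) \<in> \<A>" by (rule closure)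
      moreover have "t \<in> T (K \<union> coef t ` S \<union> bar ` (K \<union> coef t ` S))" by (rule mem_T) blast
      ultimately show "t \<in> \<Union>(T ` \<A>)" by blast
    qed simp
    show "\<forall>Tj\<in>T ` \<A>. is_subring Tj \<and> bar ` Tj \<subseteq> Tj \<and> lam \<in> Tj \<and>
        (\<exists>C'. is_subring C' \<and> C' \<subseteq> center_of Tj \<and> noetherian_module (norm_sums bar C') Tj)"
      using props by blast
  qed
qed

end
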